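(* Let $\mathfrak{g}_1,\mathfrak{g}_2$ be real solvable Lie algebras with $m_i=b_1(\mathfrak{g}_i)$. If $\mathcal{N}(\mathfrak{g}_1)=\mathcal{N}(\mathfrak{g}_2)=0$, then $\mathcal{N}(\mathfrak{g}_1\underline{\times}\mathfrak{g}_2)=m_1m_2$.
   Context: All Lie algebras are finite-dimensional over $\mathbb{R}$; $b_1(\mathfrak{g})=\dim\mathfrak{g}/[\mathfrak{g},\mathfrak{g}]$. $\mathcal{N}(\mathfrak{g})$ denotes the number of functionally independent invariants of the coadjoint representation: $\mathcal{N}(\mathfrak{g})=\dim\mathfrak{g}-\max_x\operatorname{rank}\big(\sum_k C_{ij}^kx_k\big)_{i,j}$, where $C_{ij}^k$ are the structure constants in a basis. Product by generators: choose linear forms $\omega_1,\dots,\omega_{m_1}$ on $\mathfrak{g}_1$ vanishing on $[\mathfrak{g}_1,\mathfrak{g}_1]$ and inducing a basis of $(\mathfrak{g}_1/[\mathfrak{g}_1,\mathfrak{g}_1])^*$, similarly $\omega'_1,\dots,\omega'_{m_2}$ for $\mathfrak{g}_2$; $\mathfrak{g}_1\underline{\times}\mathfrak{g}_2$ is the Lie algebra on $\mathfrak{g}_1\oplus\mathfrak{g}_2\oplus\mathbb{R}^{m_1m_2}$ (basis $Z_{ij}$ of the last summand) whose bracket restricts to the given brackets on $\mathfrak{g}_1$ and $\mathfrak{g}_2$, with $Z_{ij}$ central and $[x,y]=\sum_{i,j}\omega_i(x)\omega'_j(y)Z_{ij}$ for $x\in\mathfrak{g}_1$, $y\in\mathfrak{g}_2$.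 *)

theory Defs
  imports "HOL-Analysis.Analysis"
begin

text \<open>A finite-dimensional real Lie algebra of dimension CARD('n) is modelled as a
  bracket on real^'n (coordinates w.r.t. the standard basis axis i 1).\<close>

definition lie_algebra :: "(real^'n \<Rightarrow> real^'n \<Rightarrow> real^'n) \<Rightarrow> bool" where
  "lie_algebra br \<longleftrightarrow> bilinear br \<and> (\<forall>x. br x x = 0) \<and>
     (\<forall>x y z. br x (br y z) + br y (br z x) + br z (br x y) = 0)"

definition derived_set :: "(real^'n \<Rightarrow> real^'n \<Rightarrow> real^'n) \<Rightarrow> (real^'n) set \<Rightarrow> (real^'n) set" where
  "derived_set br S = span {br x y | x y. x \<in> S \<and> y \<in> S}"

definition derived_series :: "(real^'n \<Rightarrow> real^'n \<Rightarrow> real^'n) \<Rightarrow> nat \<Rightarrow> (real^'n) set" where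
  "derived_series br k = (derived_set br ^^ k) UNIV"

definition solvable_lie :: "(real^'n \<Rightarrow> real^'n \<Rightarrow> real^'n) \<Rightarrow> bool" where
  "solvable_lie br \<longleftrightarrow> (\<exists>k. derived_series br k = {0})"

definition betti1 :: "(real^'n \<Rightarrow> real^'n \<Rightarrow> real^'n) \<Rightarrow> nat" where
  "betti1 br = CARD('n) - dim (derived_set br UNIV)"

definition structure_const :: "(real^'n \<Rightarrow> real^'n \<Rightarrow> real^'n) \<Rightarrow> 'n \<Rightarrow> 'n \<Rightarrow> 'n \<Rightarrow> real" where
  "structure_const br i j k = br (axis i 1) (axis j 1) $ k"

definition coadj_matrix :: "(real^'n \<Rightarrow> real^'n \<Rightarrow> real^'n) \<Rightarrow> real^'n \<Rightarrow> real^'n^'n" where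
  "coadj_matrix br x = (\<chi> i j. \<Sum>k\<in>UNIV. structure_const br i j k * x $ k)"

text \<open>Number of functionally independent invariants of the coadjoint representation.\<close>
definition num_invariants :: "(real^'n \<Rightarrow> real^'n \<Rightarrow> real^'n) \<Rightarrow> nat" where
  "num_invariants br = CARD('n) - Max (range (\<lambda>x. rank (coadj_matrix br x)))"

text \<open>The underlying space is g1 + g2 + R^(m1 m2), coordinates
  indexed by 'n1 + ('n2 + ('i \<times> 'j)). The linear forms omega_i, omega'_j are represented by
  vectors w1 i, w2 j via the inner product: omega_i(x) = w1 i \<bullet> x.\<close>

definition pr1 :: "real^('n1::finite + ('n2::finite + ('i::finite \<times> 'j::finite))) \<Rightarrow> real^'n1" where
  "pr1 z = (\<chi> a. z $ Inl a)"

definition pr2 :: "real^('n1::finite + ('n2::finite + ('i::finite \<times> 'j::finite))) \<Rightarrow> real^'n2" where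
  "pr2 z = (\<chi> b. z $ Inr (Inl b))"

definition gen_product ::
  "(real^'n1::finite \<Rightarrow> real^'n1 \<Rightarrow> real^'n1) \<Rightarrow> (real^'n2::finite \<Rightarrow> real^'n2 \<Rightarrow> real^'n2) \<Rightarrow>
   ('i::finite \<Rightarrow> real^'n1) \<Rightarrow> ('j::finite \<Rightarrow> real^'n2) \<Rightarrow>
   real^('n1 + ('n2 + ('i \<times> 'j))) \<Rightarrow> real^('n1 + ('n2 + ('i \<times> 'j))) \<Rightarrow> real^('n1 + ('n2 + ('i \<times> 'j)))"
where
  "gen_product br1 br2 w1 w2 z u = (\<chi> c. case c of
       Inl a \<Rightarrow> br1 (pr1 z) (pr1 u) $ a
     | Inr (Inl b) \<Rightarrow> br2 (pr2 z) (pr2 u) $ b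
     | Inr (Inr (i, j)) \<Rightarrow> (w1 i \<bullet> pr1 z) * (w2 j \<bullet> pr2 u) - (w1 i \<bullet> pr1 u) * (w2 j \<bullet> pr2 z))"

end

theory Submission
  imports Defs "HOL-Library.Cardinality"
begin

text \<open>The central coordinates Z_ij of the product by generators give zero rows of the coadjoint
  matrix at every point, so its rank is at most dim g1 + dim g2. At a point (x1, x2, 0) the
  cross terms of the bracket pair with the vanishing central coordinates, and the matrix becomes
  block diagonal with the coadjoint matrices of g1 at x1 and of g2 at x2. If N(g1) = N(g2) = 0
  both blocks can be made invertible, so the generic rank is exactly dim g1 + dim g2, and the
  number of invariants is the dimension m1 m2 of the centre.\<close>

lemma sum_UNIV_Plus:
  "sum f (UNIV :: ('a::finite + 'b::finite) set) = (\<Sum>a\<in>UNIV. f (Inl a)) + (\<Sum>b\<in>UNIV. f (Inr b))"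
  using sum.Plus[of UNIV UNIV f] by (simp add: o_def)

lemma coadj_matrix_mult_vec:
  fixes br :: "real^'n \<Rightarrow> real^'n \<Rightarrow> real^'n"
  assumes "linear (br (axis i 1))"
  shows "(coadj_matrix br x *v v) $ i = x \<bullet> br (axis i 1) v"
proof -
  have "br (axis i 1) v = (\<Sum>j\<in>UNIV. v $ j *\<^sub>R br (axis i 1) (axis j 1))"
    using linear_sum[OF assms] linear_cmul[OF assms] basis_expansion[of v]
    by (metis (no_types, lifting) scalar_mult_eq_scaleR sum.cong)
  then show ?thesis
    by (simp add: matrix_vector_mult_def coadj_matrix_def structure_const_def inner_sum_right
        inner_vec_def sum_distrib_left mult_ac)
      (rule sum.swap)
qed

lemma finite_range_rank_coadj_matrix:
  fixes br :: "real^'n \<Rightarrow> real^'n \<Rightarrow> real^'n"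
  shows "finite (range (\<lambda>x. rank (coadj_matrix br x)))"
  by (rule finite_subset[of _ "{..CARD('n)}"]) (auto intro: order_trans[OF rank_bound])

lemma num_invariants_eqI:
  fixes br :: "real^'n \<Rightarrow> real^'n \<Rightarrow> real^'n"
  assumes "\<And>x. rank (coadj_matrix br x) \<le> r" and "rank (coadj_matrix br x\<^sub>0) = r"
  shows "num_invariants br = CARD('n) - r"
proof -
  have "Max (range (\<lambda>x. rank (coadj_matrix br x))) = r"
    using assms finite_range_rank_coadj_matrix by (intro Max_eqI) auto
  then show ?thesis by (simp add: num_invariants_def)
qed

lemma num_invariants_eq_0_imp_surj:
  fixes br :: "real^'n \<Rightarrow> real^'n \<Rightarrow> real^'n"
  assumes "num_invariants br = 0"
  obtains x where "surj ((*v) (coadj_matrix br x))"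
proof -
  let ?R = "range (\<lambda>x. rank (coadj_matrix br x))"
  obtain x where "Max ?R = rank (coadj_matrix br x)"
    using Max_in[OF finite_range_rank_coadj_matrix] by blast
  then have "rank (coadj_matrix br x) = CARD('n)"
    using assms rank_bound[of "coadj_matrix br x"] by (simp add: num_invariants_def)
  then show ?thesis using that full_rank_surjective by blast
qed

definition gen_product_vec ::
  "real^'n1 \<Rightarrow> real^'n2 \<Rightarrow> real^('n1::finite + ('n2::finite + ('i::finite \<times> 'j::finite)))"
where
  "gen_product_vec x1 x2 = (\<chi> c. case c of Inl a \<Rightarrow> x1 $ a | Inr (Inl b) \<Rightarrow> x2 $ b | Inr (Inr _) \<Rightarrow> 0)"

definition factor_subspace :: "(real^('n1::finite + ('n2::finite + ('i::finite \<times> 'j::finite)))) set"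
  where "factor_subspace = {y. \<forall>p. y $ Inr (Inr p) = 0}"

lemma pr1_add [simp]: "pr1 (x + y) = pr1 x + pr1 y"
  and pr1_scaleR [simp]: "pr1 (c *\<^sub>R x) = c *\<^sub>R pr1 x"
  and pr2_add [simp]: "pr2 (x + y) = pr2 x + pr2 y"
  and pr2_scaleR [simp]: "pr2 (c *\<^sub>R x) = c *\<^sub>R pr2 x"
  by (simp_all add: pr1_def pr2_def vec_eq_iff)

lemma pr_axis [simp]:
  fixes a :: "'n1::finite" and b :: "'n2::finite" and p :: "'i::finite \<times> 'j::finite"
  shows "pr1 (axis (Inl a) 1 :: real^('n1 + ('n2 + ('i \<times> 'j)))) = axis a 1"
    and "pr1 (axis (Inr r) 1 :: real^('n1 + ('n2 + ('i \<times> 'j)))) = 0"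
    and "pr2 (axis (Inl a) 1 :: real^('n1 + ('n2 + ('i \<times> 'j)))) = 0"
    and "pr2 (axis (Inr (Inl b)) 1 :: real^('n1 + ('n2 + ('i \<times> 'j)))) = axis b 1"
    and "pr2 (axis (Inr (Inr p)) 1 :: real^('n1 + ('n2 + ('i \<times> 'j)))) = 0"
  by (simp_all add: pr1_def pr2_def axis_def vec_eq_iff)

lemma pr1_gen_product_vec [simp]: "pr1 (gen_product_vec x1 x2) = x1"
  by (simp add: pr1_def gen_product_vec_def)

lemma pr2_gen_product_vec [simp]: "pr2 (gen_product_vec x1 x2) = x2"
  by (simp add: pr2_def gen_product_vec_def)

lemma gen_product_vec_pr1_pr2:
  "y \<in> factor_subspace \<Longrightarrow> gen_product_vec (pr1 y) (pr2 y) = y"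
  by (auto simp: gen_product_vec_def factor_subspace_def pr1_def pr2_def vec_eq_iff
      split: sum.split)

lemma dim_factor_subspace:
  "dim (factor_subspace :: (real^('n1::finite + ('n2::finite + ('i::finite \<times> 'j::finite)))) set)
     = CARD('n1) + CARD('n2)"
proof -
  let ?T = "range Inl \<union> range (Inr \<circ> Inl) :: ('n1 + ('n2 + ('i \<times> 'j))) set"
  have "factor_subspace = {y :: real^('n1 + ('n2 + ('i \<times> 'j))). \<forall>c. c \<notin> ?T \<longrightarrow> y $ c = 0}"
    unfolding factor_subspace_def
  proof (intro Collect_cong iffI allI impI)
    fix y :: "real^('n1 + ('n2 + ('i \<times> 'j)))" and c
    assume "\<forall>p. y $ Inr (Inr p) = 0" and "c \<notin> ?T"
    then show "y $ c = 0" by (cases c rule: sum.exhaust, simp, rename_tac r, case_tac r, auto)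
  qed auto
  moreover have "card ?T = CARD('n1) + CARD('n2)"
    by (subst card_Un_disjoint) (auto simp: card_image inj_on_def)
  ultimately show ?thesis
    using dim_substandard_cart[where 'a=real, of ?T] by (simp add: dim_vec_eq)
qed

lemma inner_gen_product_vec_gen_product:
  "gen_product_vec x1 x2 \<bullet> gen_product br1 br2 w1 w2 z u
     = x1 \<bullet> br1 (pr1 z) (pr1 u) + x2 \<bullet> br2 (pr2 z) (pr2 u)"
  by (simp add: inner_vec_def gen_product_vec_def gen_product_def sum_UNIV_Plus)

lemma linear_gen_product_right:
  assumes "bilinear br1" and "bilinear br2"
  shows "linear (gen_product br1 br2 w1 w2 z)"
proof -
  have "linear (br1 (pr1 z))" "linear (br2 (pr2 z))"
    using assms by (auto simp: bilinear_def)
  then show ?thesis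
    by (auto intro!: linearI simp: gen_product_def vec_eq_iff linear_add linear_scale
        algebra_simps split: sum.split prod.split)
qed

lemma gen_product_central:
  assumes "bilinear br1" and "bilinear br2" and "pr1 z = 0" and "pr2 z = 0"
  shows "gen_product br1 br2 w1 w2 z u = 0"
  unfolding gen_product_def
  by (subst vec_eq_iff) (simp add: assms bilinear_lzero split: sum.split prod.split)

lemma range_coadj_gen_product_subset:
  assumes "bilinear br1" and "bilinear br2"
  shows "range ((*v) (coadj_matrix (gen_product br1 br2 w1 w2) x)) \<subseteq> factor_subspace"
proof (clarsimp simp: factor_subspace_def)
  fix v p
  have "(coadj_matrix (gen_product br1 br2 w1 w2) x *v v) $ Inr (Inr p)
      = x \<bullet> gen_product br1 br2 w1 w2 (axis (Inr (Inr p)) 1) v"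
    using assms by (intro coadj_matrix_mult_vec linear_gen_product_right)
  also have "\<dots> = 0"
    using assms by (simp add: gen_product_central)
  finally show "(coadj_matrix (gen_product br1 br2 w1 w2) x *v v) $ Inr (Inr p) = 0" .
qed

lemma coadj_gen_product_mult_gen_product_vec:
  assumes "bilinear br1" and "bilinear br2"
  shows "coadj_matrix (gen_product br1 br2 w1 w2) (gen_product_vec x1 x2) *v gen_product_vec v1 v2
      = gen_product_vec (coadj_matrix br1 x1 *v v1) (coadj_matrix br2 x2 *v v2)"
proof -
  have lin: "linear (br1 (axis a 1))" "linear (br2 (axis b 1))" for a b
    using assms by (auto simp: bilinear_def)
  have "(coadj_matrix (gen_product br1 br2 w1 w2) (gen_product_vec x1 x2) *v gen_product_vec v1 v2) $ c
      = x1 \<bullet> br1 (pr1 (axis c 1)) v1 + x2 \<bullet> br2 (pr2 (axis c 1)) v2" for c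
    by (simp add: coadj_matrix_mult_vec linear_gen_product_right assms inner_gen_product_vec_gen_product)
  then show ?thesis
    using assms
    by (auto simp: vec_eq_iff gen_product_vec_def bilinear_lzero
        coadj_matrix_mult_vec[where br = br1, OF lin(1)]
        coadj_matrix_mult_vec[where br = br2, OF lin(2)] split: sum.split)
qed

lemma rank_coadj_gen_product_le:
  fixes br1 :: "real^'n1 \<Rightarrow> real^'n1 \<Rightarrow> real^'n1" and br2 :: "real^'n2 \<Rightarrow> real^'n2 \<Rightarrow> real^'n2"
    and w1 :: "'i::finite \<Rightarrow> real^'n1" and w2 :: "'j::finite \<Rightarrow> real^'n2"
  assumes "bilinear br1" and "bilinear br2"
  shows "rank (coadj_matrix (gen_product br1 br2 w1 w2) x) \<le> CARD('n1) + CARD('n2)"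
  using dim_subset[OF range_coadj_gen_product_subset[OF assms]]
  by (simp add: rank_dim_range dim_factor_subspace)

lemma rank_coadj_gen_product_vec:
  fixes br1 :: "real^'n1 \<Rightarrow> real^'n1 \<Rightarrow> real^'n1" and br2 :: "real^'n2 \<Rightarrow> real^'n2 \<Rightarrow> real^'n2"
    and w1 :: "'i::finite \<Rightarrow> real^'n1" and w2 :: "'j::finite \<Rightarrow> real^'n2"
  assumes "bilinear br1" and "bilinear br2"
    and "surj ((*v) (coadj_matrix br1 x1))" and "surj ((*v) (coadj_matrix br2 x2))"
  shows "rank (coadj_matrix (gen_product br1 br2 w1 w2)
      (gen_product_vec x1 x2 :: real^('n1 + ('n2 + ('i \<times> 'j))))) = CARD('n1) + CARD('n2)"
proof -
  let ?M = "coadj_matrix (gen_product br1 br2 w1 w2) (gen_product_vec x1 x2 :: real^('n1 + ('n2 + ('i \<times> 'j))))"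
  have "factor_subspace \<subseteq> range ((*v) ?M)"
  proof
    fix y :: "real^('n1 + ('n2 + ('i \<times> 'j)))"
    assume y: "y \<in> factor_subspace"
    obtain v1 v2 where "coadj_matrix br1 x1 *v v1 = pr1 y" and "coadj_matrix br2 x2 *v v2 = pr2 y"
      using assms(3,4) by (metis surjD)
    then have "?M *v gen_product_vec v1 v2 = y"
      by (simp add: coadj_gen_product_mult_gen_product_vec[OF assms(1,2)] gen_product_vec_pr1_pr2[OF y])
    then show "y \<in> range ((*v) ?M)" by (metis rangeI)
  qed
  then have "range ((*v) ?M) = factor_subspace"
    using range_coadj_gen_product_subset[OF assms(1,2)] by blast
  then show ?thesis
    by (simp add: rank_dim_range dim_factor_subspace)
qed

theorem corollary1:
  fixes br1 :: "real^'n1 \<Rightarrow> real^'n1 \<Rightarrow> real^'n1"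
    and br2 :: "real^'n2 \<Rightarrow> real^'n2 \<Rightarrow> real^'n2"
    and w1 :: "'i::finite \<Rightarrow> real^'n1"
    and w2 :: "'j::finite \<Rightarrow> real^'n2"
  assumes "lie_algebra br1" and "lie_algebra br2"
    and "solvable_lie br1" and "solvable_lie br2"
    and "CARD('i) = betti1 br1" and "CARD('j) = betti1 br2"
    and "\<forall>i x y. w1 i \<bullet> br1 x y = 0" and "\<forall>j x y. w2 j \<bullet> br2 x y = 0"
    and "inj w1" and "independent (range w1)"
    and "inj w2" and "independent (range w2)"
    and "num_invariants br1 = 0" and "num_invariants br2 = 0"
  shows "num_invariants (gen_product br1 br2 w1 w2) = betti1 br1 * betti1 br2"
proof -
  have bil: "bilinear br1" "bilinear br2"
    using assms(1,2) by (simp_all add: lie_algebra_def)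
  obtain x1 where x1: "surj ((*v) (coadj_matrix br1 x1))"
    using num_invariants_eq_0_imp_surj[OF assms(13)] .
  obtain x2 where x2: "surj ((*v) (coadj_matrix br2 x2))"
    using num_invariants_eq_0_imp_surj[OF assms(14)] .
  have "num_invariants (gen_product br1 br2 w1 w2)
      = CARD('n1 + ('n2 + ('i \<times> 'j))) - (CARD('n1) + CARD('n2))"
    using rank_coadj_gen_product_le[OF bil] rank_coadj_gen_product_vec[OF bil x1 x2]
    by (rule num_invariants_eqI)
  then show ?thesis
    using assms(5,6) by simp
qed

end
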